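(* Let $G$ be a connected graph with vertex set $\{v_1,\dots,v_n\}$, $n\geq 2$, and let $\widehat{G}$ be the graph constructed from $G$ as described in the context. Then the branch graph $B(\widehat{G}/C_q)$ is isomorphic to $G$, via the map $P_i\mapsto v_i$.
   Context: Construction of $\widehat{G}$: let $T$ be the star with center $q$ and leaves $y_1,\dots,y_n$. Let $\mathcal{P}$ be the family of paths of $T$ consisting of: for each $1\le i\le n$ a one-vertex path $P_i$ with $V(P_i)=\{y_i\}$; for each $1\le i<j\le n$ with $v_iv_j\in E(G)$ a path $P_{ij}$ with $V(P_{ij})=\{y_i,q,y_j\}$; for each $i$ with $d_G(v_i)=1$ a path $P_{iq}$ with $V(P_{iq})=\{q,y_i\}$. $\widehat{G}$ is the vertex-intersection graph of $\mathcal{P}$ (its vertices are the paths, two adjacent iff they share a vertex of $T$). $C_q$ is the set of paths of $\mathcal{P}$ containing $q$; it is a clique (maximal complete set) of $\widehat{G}$. For a clique $C$ of a graph $H$, the branch graph $B(H/C)$ has vertex set the vertices of $V(H)\setminus C$ adjacent to some vertex of $C$, and two such vertices $v,w$ are adjacent in $B(H/C)$ iff (1) $vw\notin E(H)$; (2) some vertex of $C$ is adjacent to both; and (3) there exist $v',w'\in C$ with $v'$ adjacent to $v$ but not to $w$, and $w'$ adjacent to $w$ but not to $v$. *)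

theory Defs
  imports Main
begin

text \<open>A graph G with vertex set {v_1,...,v_n} is represented by the index set {1..n}
  and a symmetric irreflexive edge relation E on indices.\<close>

definition simple_graph :: "nat \<Rightarrow> (nat \<Rightarrow> nat \<Rightarrow> bool) \<Rightarrow> bool" where
  "simple_graph n E \<longleftrightarrow>
     (\<forall>i j. E i j \<longrightarrow> i \<in> {1..n} \<and> j \<in> {1..n}) \<and>
     (\<forall>i j. E i j \<longrightarrow> E j i) \<and> (\<forall>i. \<not> E i i)"

definition connected_graph :: "nat \<Rightarrow> (nat \<Rightarrow> nat \<Rightarrow> bool) \<Rightarrow> bool" where
  "connected_graph n E \<longleftrightarrow> (\<forall>i\<in>{1..n}. \<forall>j\<in>{1..n}. E\<^sup>*\<^sup>* i j)"

definition degree :: "nat \<Rightarrow> (nat \<Rightarrow> nat \<Rightarrow> bool) \<Rightarrow> nat \<Rightarrow> nat" where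
  "degree n E i = card {j \<in> {1..n}. E i j}"

text \<open>Vertices of the star T: centre q and leaves y_i.\<close>
datatype tvert = Qc | Y nat

datatype tpath = P nat | Pij nat nat | Piq nat

fun pverts :: "tpath \<Rightarrow> tvert set" where
  "pverts (P i) = {Y i}"
| "pverts (Pij i j) = {Y i, Qc, Y j}"
| "pverts (Piq i) = {Qc, Y i}"

definition path_family :: "nat \<Rightarrow> (nat \<Rightarrow> nat \<Rightarrow> bool) \<Rightarrow> tpath set" where
  "path_family n E =
     {P i | i. i \<in> {1..n}}
   \<union> {Pij i j | i j. 1 \<le> i \<and> i < j \<and> j \<le> n \<and> E i j}
   \<union> {Piq i | i. i \<in> {1..n} \<and> degree n E i = 1}"

text \<open>Vertex-intersection graph of the family (vertex set: path_family n E).\<close>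
definition hat_adj :: "tpath \<Rightarrow> tpath \<Rightarrow> bool" where
  "hat_adj p p' \<longleftrightarrow> p \<noteq> p' \<and> pverts p \<inter> pverts p' \<noteq> {}"

definition Cq :: "nat \<Rightarrow> (nat \<Rightarrow> nat \<Rightarrow> bool) \<Rightarrow> tpath set" where
  "Cq n E = {p \<in> path_family n E. Qc \<in> pverts p}"

definition branch_verts :: "'a set \<Rightarrow> ('a \<Rightarrow> 'a \<Rightarrow> bool) \<Rightarrow> 'a set \<Rightarrow> 'a set" where
  "branch_verts V A C = {v \<in> V - C. \<exists>c\<in>C. A v c}"

definition branch_adj :: "'a set \<Rightarrow> ('a \<Rightarrow> 'a \<Rightarrow> bool) \<Rightarrow> 'a set \<Rightarrow> 'a \<Rightarrow> 'a \<Rightarrow> bool" where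
  "branch_adj V A C v w \<longleftrightarrow>
     v \<in> branch_verts V A C \<and> w \<in> branch_verts V A C \<and>
     \<not> A v w \<and>
     (\<exists>c\<in>C. A c v \<and> A c w) \<and>
     (\<exists>v'\<in>C. \<exists>w'\<in>C. A v' v \<and> \<not> A v' w \<and> A w' w \<and> \<not> A w' v)"

end

theory Submission
  imports Defs
begin

(* The paths of C_q are exactly the P_ij (one per edge v_i v_j of G)
   and the P_iq (one per pendant vertex v_i); the one-vertex paths P_i are never in C_q.
   Two facts about C_q carry the whole argument:
   (a) two distinct leaves y_i, y_j lie on a common path of C_q iff v_i v_j is an edge;
   (b) for every edge v_i v_j there is a path of C_q through y_i avoiding y_j: some P_ik
       with k <> j if v_i has another neighbour, and P_iq if v_i is pendant.
   Since G is connected with n >= 2, every vertex has a neighbour, so every P_i meets C_q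
   and the branch vertices are exactly the P_i.  Two branch vertices P_i, P_j are adjacent
   in B(G^/C_q) iff they have a common neighbour in C_q (condition (2)), which by (a) means
   v_i v_j is an edge; conversely, for an edge, (b) supplies the witnesses of condition (3). *)

lemma hat_adj_P_iff:
  "hat_adj c (P i) \<longleftrightarrow> c \<noteq> P i \<and> Y i \<in> pverts c"
  "hat_adj (P i) c \<longleftrightarrow> c \<noteq> P i \<and> Y i \<in> pverts c"
  by (auto simp: hat_adj_def)

lemma Cq_iff:
  "c \<in> Cq n E \<longleftrightarrow>
     (\<exists>i j. c = Pij i j \<and> 1 \<le> i \<and> i < j \<and> j \<le> n \<and> E i j) \<or>
     (\<exists>i. c = Piq i \<and> i \<in> {1..n} \<and> degree n E i = 1)"
  by (auto simp: Cq_def path_family_def)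

lemma P_notin_Cq: "P i \<notin> Cq n E"
  by (simp add: Cq_def)

lemma simple_graph_edgeD:
  assumes "simple_graph n E" "E i j"
  shows "E j i" "i \<noteq> j" "i \<in> {1..n}" "j \<in> {1..n}"
  using assms unfolding simple_graph_def by blast+

lemma connected_has_neighbour:
  assumes "connected_graph n E" "n \<ge> 2" "i \<in> {1..n}"
  shows "\<exists>k. E i k"
proof -
  obtain j where j: "j \<in> {1..n}" "j \<noteq> i"
  proof (cases "i = 1")
    case True
    then show ?thesis using assms(2) by (intro that[of 2]) auto
  next
    case False
    then show ?thesis using assms(2,3) by (intro that[of 1]) auto
  qed
  have "E\<^sup>*\<^sup>* i j"
    using assms(1,3) j(1) unfolding connected_graph_def by blast
  then show ?thesis
    using j(2) by (cases rule: converse_rtranclpE) auto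
qed

lemma edge_covered_by_Cq:
  assumes "simple_graph n E" "E i j"
  shows "\<exists>c\<in>Cq n E. Y i \<in> pverts c \<and> Y j \<in> pverts c"
proof (cases "i < j")
  case True
  then show ?thesis
    using assms simple_graph_edgeD[OF assms] by (intro bexI[of _ "Pij i j"]) (auto simp: Cq_iff)
next
  case False
  then have "j < i"
    using simple_graph_edgeD(2)[OF assms] by simp
  then show ?thesis
    using simple_graph_edgeD[OF assms] by (intro bexI[of _ "Pij j i"]) (auto simp: Cq_iff)
qed

text \<open>Fact (a), backward direction: two distinct leaves on a common path of C_q are
  adjacent in G, since that path must be P_ij.\<close>
lemma Cq_common_path_imp_edge:
  assumes "simple_graph n E" "c \<in> Cq n E" "Y i \<in> pverts c" "Y j \<in> pverts c" "i \<noteq> j"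
  shows "E i j"
  using assms(2-5) simple_graph_edgeD(1)[OF assms(1)] unfolding Cq_iff
  by (elim disjE exE conjE) auto

lemma Cq_private_path:
  assumes "simple_graph n E" "E i j"
  shows "\<exists>c\<in>Cq n E. Y i \<in> pverts c \<and> Y j \<notin> pverts c"
proof (cases "\<exists>k. E i k \<and> k \<noteq> j")
  case True
  then obtain k where k: "E i k" "k \<noteq> j"
    by blast
  obtain c where c: "c \<in> Cq n E" "Y i \<in> pverts c" "Y k \<in> pverts c"
    using edge_covered_by_Cq[OF assms(1) k(1)] by blast
  have "i \<noteq> j" "i \<noteq> k"
    using simple_graph_edgeD(2)[OF assms(1)] assms(2) k(1) by auto
  then have "Y j \<notin> pverts c"
    using c k(2) unfolding Cq_iff by (elim disjE exE conjE) auto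
  then show ?thesis
    using c by blast
next
  case False
  note ij = simple_graph_edgeD[OF assms]
  have "{k \<in> {1..n}. E i k} = {j}"
    using False assms(2) ij(4) by blast
  then have "degree n E i = 1"
    by (simp add: degree_def)
  then show ?thesis
    using ij by (intro bexI[of _ "Piq i"]) (simp_all add: Cq_iff)
qed

lemma branch_verts_Cq:
  assumes "simple_graph n E" "connected_graph n E" "n \<ge> 2"
  shows "branch_verts (path_family n E) hat_adj (Cq n E) = P ` {1..n}"
proof
  show "branch_verts (path_family n E) hat_adj (Cq n E) \<subseteq> P ` {1..n}"
    by (auto simp: branch_verts_def path_family_def Cq_def)
next
  show "P ` {1..n} \<subseteq> branch_verts (path_family n E) hat_adj (Cq n E)"
  proof
    fix x assume "x \<in> P ` {1..n}"
    then obtain i where i: "i \<in> {1..n}" "x = P i"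
      by auto
    obtain k where "E i k"
      using connected_has_neighbour[OF assms(2,3) i(1)] by blast
    then obtain c where c: "c \<in> Cq n E" "Y i \<in> pverts c"
      using edge_covered_by_Cq[OF assms(1)] by blast
    have "hat_adj (P i) c"
      using c P_notin_Cq[of i n E] by (auto simp: hat_adj_P_iff)
    then show "x \<in> branch_verts (path_family n E) hat_adj (Cq n E)"
      using i c(1) by (auto simp: branch_verts_def path_family_def P_notin_Cq)
  qed
qed

text \<open>Adjacency in the branch graph forces an edge: condition (3) gives i \<noteq> j and
  condition (2) a common path of C_q through y_i and y_j.\<close>
lemma branch_adj_imp_edge:
  assumes "simple_graph n E" "branch_adj (path_family n E) hat_adj (Cq n E) (P i) (P j)"
  shows "E i j"
proof -
  obtain v' where v': "hat_adj v' (P i)" "\<not> hat_adj v' (P j)"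
    using assms(2) unfolding branch_adj_def by blast
  then have "i \<noteq> j"
    by metis
  obtain c where c: "c \<in> Cq n E" "hat_adj c (P i)" "hat_adj c (P j)"
    using assms(2) unfolding branch_adj_def by blast
  then show ?thesis
    using Cq_common_path_imp_edge[OF assms(1) c(1) _ _ \<open>i \<noteq> j\<close>] by (simp add: hat_adj_P_iff)
qed

lemma edge_imp_branch_adj:
  assumes "simple_graph n E" "E i j"
    and "P i \<in> branch_verts (path_family n E) hat_adj (Cq n E)"
    and "P j \<in> branch_verts (path_family n E) hat_adj (Cq n E)"
  shows "branch_adj (path_family n E) hat_adj (Cq n E) (P i) (P j)"
proof -
  have "i \<noteq> j" "E j i"
    using simple_graph_edgeD[OF assms(1,2)] by auto
  then have not_adj: "\<not> hat_adj (P i) (P j)"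
    by (auto simp: hat_adj_def)
  obtain c where c: "c \<in> Cq n E" "Y i \<in> pverts c" "Y j \<in> pverts c"
    using edge_covered_by_Cq[OF assms(1,2)] by blast
  obtain v' where v': "v' \<in> Cq n E" "Y i \<in> pverts v'" "Y j \<notin> pverts v'"
    using Cq_private_path[OF assms(1,2)] by blast
  obtain w' where w': "w' \<in> Cq n E" "Y j \<in> pverts w'" "Y i \<notin> pverts w'"
    using Cq_private_path[OF assms(1) \<open>E j i\<close>] by blast
  have "hat_adj c (P i)" "hat_adj c (P j)" "hat_adj v' (P i)" "\<not> hat_adj v' (P j)"
       "hat_adj w' (P j)" "\<not> hat_adj w' (P i)"
    using c v' w' P_notin_Cq[of _ n E] by (auto simp: hat_adj_P_iff)
  then show ?thesis
    unfolding branch_adj_def using assms(3,4) not_adj c(1) v'(1) w'(1) by blast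
qed

theorem claim1:
  fixes n :: nat and E :: "nat \<Rightarrow> nat \<Rightarrow> bool"
  assumes "simple_graph n E" and "connected_graph n E" and "n \<ge> 2"
  shows "bij_betw P {1..n} (branch_verts (path_family n E) hat_adj (Cq n E)) \<and>
         (\<forall>i\<in>{1..n}. \<forall>j\<in>{1..n}.
            branch_adj (path_family n E) hat_adj (Cq n E) (P i) (P j) \<longleftrightarrow> E i j)"
proof (intro conjI ballI)
  note branch_verts = branch_verts_Cq[OF assms]
  show "bij_betw P {1..n} (branch_verts (path_family n E) hat_adj (Cq n E))"
    unfolding branch_verts by (simp add: bij_betw_def inj_on_def)
  fix i j assume "i \<in> {1..n}" "j \<in> {1..n}"
  then show "branch_adj (path_family n E) hat_adj (Cq n E) (P i) (P j) \<longleftrightarrow> E i j"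
    using branch_adj_imp_edge[OF assms(1)] edge_imp_branch_adj[OF assms(1)]
    unfolding branch_verts by blast
qed

end
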